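(* Let $\mathcal{F}_2$ be the field of (locally) analytic functions of $(x,y)$, $X=\partial/\partial x$, $Y=\partial/\partial y$, and $\mathcal{F}_2((X))$ the skew field of formal pseudodifferential operators in $X$ with coefficients in $\mathcal{F}_2$. Let $u\in\mathcal{F}_2$ and $M=Y-X^{-1}\cdot u\in\mathcal{F}_2((X))[Y]$. Let $n\ge1$ be an integer and let $P\in\mathcal{F}_2((X))$ have order $n$ and satisfy $[P,M]=0$. If $R\in\mathcal{F}_2((X))$ satisfies $R^n=P$, then $[R,M]=0$.
   Context: $\mathcal{F}_2((X))$ consists of formal series $\sum_{i\ge0}p_{n-i}X^{n-i}$ with $p_j\in\mathcal{F}_2$, $n\in\mathbb{Z}$ (order $n$ if $p_n\neq0$), multiplied by the usual composition rule of pseudodifferential operators, $X^{k}\cdot a=\sum_{j\ge0}\binom{k}{j}a^{(j)}X^{k-j}$ ($a^{(j)}$ the $j$-th $x$-derivative, generalized binomial coefficients). $\mathcal{F}_2((X))[Y]$ is the ring of polynomials in $Y$ with coefficients in $\mathcal{F}_2((X))$, where $Y$ commutes with $X$ and $Y\cdot a=aY+\partial a/\partial y$ for $a\in\mathcal{F}_2$. $[A,B]=AB-BA$. *)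

theory Defs
  imports Main
begin

text \<open>Abstract differential field: a field of characteristic 0 with two commuting
derivations dx (= d/dx) and dy (= d/dy). The field F_2 of analytic functions in (x,y)
is such a field.\<close>

definition is_derivation :: "('a::field \<Rightarrow> 'a) \<Rightarrow> bool" where
  "is_derivation D \<longleftrightarrow> (\<forall>a b. D (a + b) = D a + D b) \<and> (\<forall>a b. D (a * b) = D a * b + a * D b)"

text \<open>Formal pseudodifferential operators in X: coefficient functions int => 'a
(coefficient of X^i), with support bounded above.\<close>

definition is_pdo :: "(int \<Rightarrow> 'a::zero) \<Rightarrow> bool" where
  "is_pdo A \<longleftrightarrow> (\<exists>N. \<forall>k>N. A k = 0)"

definition pdo_has_order :: "(int \<Rightarrow> 'a::zero) \<Rightarrow> int \<Rightarrow> bool" where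
  "pdo_has_order A n \<longleftrightarrow> A n \<noteq> 0 \<and> (\<forall>k>n. A k = 0)"

definition pdo_const :: "'a::zero \<Rightarrow> (int \<Rightarrow> 'a)" where
  "pdo_const a = (\<lambda>i. if i = 0 then a else 0)"

definition pdo_Xinv :: "int \<Rightarrow> 'a::{zero,one}" where
  "pdo_Xinv = (\<lambda>i. if i = -1 then 1 else 0)"

text \<open>Composition: (sum_i a_i X^i)(sum_j b_j X^j) = sum_{i,j,k} a_i binom(i,k) b_j^{(k)} X^{i+j-k}.\<close>

definition pdo_mult :: "('a::field_char_0 \<Rightarrow> 'a) \<Rightarrow> (int \<Rightarrow> 'a) \<Rightarrow> (int \<Rightarrow> 'a) \<Rightarrow> (int \<Rightarrow> 'a)" where
  "pdo_mult dx A B = (\<lambda>m. \<Sum>(i, k) \<in> {(i, k). A i \<noteq> 0 \<and> B (m + int k - i) \<noteq> 0}.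
      A i * (of_int i gchoose k) * (dx ^^ k) (B (m + int k - i)))"

definition pdo_pow :: "('a::field_char_0 \<Rightarrow> 'a) \<Rightarrow> (int \<Rightarrow> 'a) \<Rightarrow> nat \<Rightarrow> (int \<Rightarrow> 'a)" where
  "pdo_pow dx A n = ((pdo_mult dx A) ^^ n) (pdo_const 1)"

text \<open>Polynomials in Y with coefficients in F((X)): nat => (int => 'a), coefficient of Y^s.
Y commutes with X and Y a = a Y + a_y, hence
(A Y^p)(B Y^q) = sum_{r<=p} binom(p,r) A (d_y^r B) Y^{p+q-r}.\<close>

definition ypoly_mult :: "('a::field_char_0 \<Rightarrow> 'a) \<Rightarrow> ('a \<Rightarrow> 'a) \<Rightarrow>
    (nat \<Rightarrow> int \<Rightarrow> 'a) \<Rightarrow> (nat \<Rightarrow> int \<Rightarrow> 'a) \<Rightarrow> (nat \<Rightarrow> int \<Rightarrow> 'a)" where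
  "ypoly_mult dx dy A B = (\<lambda>s m. \<Sum>(p, q, r) \<in> {(p, q, r). r \<le> p \<and> p + q = s + r \<and>
        A p \<noteq> (\<lambda>_. 0) \<and> B q \<noteq> (\<lambda>_. 0)}.
      of_nat (p choose r) * pdo_mult dx (A p) (\<lambda>i. (dy ^^ r) (B q i)) m)"

definition ypoly_commutator :: "('a::field_char_0 \<Rightarrow> 'a) \<Rightarrow> ('a \<Rightarrow> 'a) \<Rightarrow>
    (nat \<Rightarrow> int \<Rightarrow> 'a) \<Rightarrow> (nat \<Rightarrow> int \<Rightarrow> 'a) \<Rightarrow> (nat \<Rightarrow> int \<Rightarrow> 'a)" where
  "ypoly_commutator dx dy A B = (\<lambda>s m. ypoly_mult dx dy A B s m - ypoly_mult dx dy B A s m)"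

definition ypoly_of_pdo :: "(int \<Rightarrow> 'a::zero) \<Rightarrow> (nat \<Rightarrow> int \<Rightarrow> 'a)" where
  "ypoly_of_pdo A = (\<lambda>s. if s = 0 then A else (\<lambda>_. 0))"

definition op_M :: "('a::field_char_0 \<Rightarrow> 'a) \<Rightarrow> 'a \<Rightarrow> (nat \<Rightarrow> int \<Rightarrow> 'a)" where
  "op_M dx u = (\<lambda>s m. if s = 1 then pdo_const 1 m
                      else if s = 0 then - pdo_mult dx pdo_Xinv (pdo_const u) m else 0)"

end

theory Submission
  imports Defs "HOL-Library.Groups_Big_Fun" "HOL-Computational_Algebra.Formal_Power_Series"
begin

text \<open>Write M = Y + N with N = -X^(-1) u. Since [Q, Y] = -Q_y, the commutator of an operator
Q of F((X)) with M is again an operator of F((X)), namely \<delta> Q = Q N - N Q - Q_y, and \<delta> is a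
derivation of the ring F((X)); this rests on the associativity of the composition of
pseudodifferential operators, which is where most of the work lies. If \<delta> R \<noteq> 0 has leading
coefficient c in degree e and R has leading coefficient r in degree \<rho>, then each of the n
summands R^k (\<delta> R) R^(n-1-k) of \<delta>(R^n) has the leading term r^(n-1) c in degree e + (n-1) \<rho>,
so \<delta>(R^n) has the coefficient n r^(n-1) c \<noteq> 0 there, as the characteristic is 0.\<close>

locale field_derivation =
  fixes D :: "'a::field_char_0 \<Rightarrow> 'a"
  assumes is_derivation: "is_derivation D"
begin

lemma add: "D (a + b) = D a + D b"
  using is_derivation unfolding is_derivation_def by blast

lemma mult: "D (a * b) = D a * b + a * D b"
  using is_derivation unfolding is_derivation_def by blast

lemma zero [simp]: "D 0 = 0"
  using add[of 0 0] by simp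

lemma minus: "D (- a) = - D a"
  using add[of a "- a"] by (simp add: add_eq_0_iff)

lemma diff: "D (a - b) = D a - D b"
  using add[of a "- b"] minus[of b] by simp

lemma one [simp]: "D 1 = 0"
  using mult[of 1 1] by simp

lemma sum: "D (sum f S) = (\<Sum>x\<in>S. D (f x))"
  by (induction S rule: infinite_finite_induct) (auto simp: add)

lemma of_nat [simp]: "D (of_nat n) = 0"
  by (induction n) (auto simp: add)

lemma of_int [simp]: "D (of_int n) = 0"
  by (cases n rule: int_cases) (auto simp: minus diff)

lemma mult_const: "D c = 0 \<Longrightarrow> D (c * x) = c * D x"
  by (simp add: mult)

lemma divide_const:
  assumes "D x = 0" "D y = 0"
  shows "D (x / y) = 0"
proof (cases "y = 0")
  case False
  have "D x = D (x / y) * y"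
    using False mult[of "x / y" y] assms(2) by simp
  then show ?thesis
    using False assms(1) by simp
qed simp

lemma prod_const: "(\<And>x. x \<in> S \<Longrightarrow> D (f x) = 0) \<Longrightarrow> D (prod f S) = 0"
  by (induction S rule: infinite_finite_induct) (auto simp: mult)

lemma gbinomial_of_int [simp]: "D (of_int i gchoose k) = 0"
proof -
  have "D (\<Prod>j=0..<k. of_int i - of_nat j) = 0"
    by (rule prod_const) (simp add: diff)
  moreover have "D (fact k) = 0"
    by (metis of_nat[of "fact k"] of_nat_fact)
  ultimately show ?thesis
    unfolding gbinomial_prod_rev by (rule divide_const)
qed

lemma higher_zero [simp]: "(D ^^ k) 0 = 0"
  by (induction k) auto

lemma higher_diff: "(D ^^ k) (a - b) = (D ^^ k) a - (D ^^ k) b"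
  by (induction k) (auto simp: diff)

lemma higher_sum: "(D ^^ k) (sum f S) = (\<Sum>x\<in>S. (D ^^ k) (f x))"
  by (induction k) (auto simp: sum)

lemma higher_mult_const: "D c = 0 \<Longrightarrow> (D ^^ k) (c * x) = c * (D ^^ k) x"
  by (induction k) (auto simp: mult_const)

lemma higher_one: "(D ^^ k) 1 = (if k = 0 then 1 else 0)"
  by (induction k) auto

lemma higher_higher: "(D ^^ p) ((D ^^ q) x) = (D ^^ (p + q)) x"
  by (simp add: funpow_add)

lemma higher_Leibniz:
  "(D ^^ n) (a * b) = (\<Sum>k\<le>n. of_nat (n choose k) * (D ^^ k) a * (D ^^ (n - k)) b)"
proof (induction n)
  case (Suc n)
  have "(D ^^ Suc n) (a * b) =
      (\<Sum>k\<le>n. of_nat (n choose k) * (D ^^ Suc k) a * (D ^^ (n - k)) b) +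
      (\<Sum>k\<le>n. of_nat (n choose k) * (D ^^ k) a * (D ^^ Suc (n - k)) b)"
    using Suc.IH by (simp add: sum mult add sum.distrib algebra_simps)
  also have "\<dots> = (\<Sum>k\<le>n. of_nat (n choose k) * (D ^^ k) a * (D ^^ (Suc n - k)) b) +
      (\<Sum>k=1..Suc n. of_nat (n choose (k - 1)) * (D ^^ k) a * (D ^^ (Suc n - k)) b)"
    by (simp add: atMost_atLeast0 sum.shift_bounds_cl_Suc_ivl Suc_diff_le field_simps
        del: sum.cl_ivl_Suc)
  also have "\<dots> = (D ^^ Suc n) b * a +
      (\<Sum>k=1..n. of_nat (n choose k) * (D ^^ k) a * (D ^^ (Suc n - k)) b) + ((D ^^ Suc n) a * b +
      (\<Sum>k=1..n. of_nat (n choose (k - 1)) * (D ^^ k) a * (D ^^ (Suc n - k)) b))"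
    using sum.nat_ivl_Suc'[of 1 n "\<lambda>k. of_nat (n choose (k - 1)) * (D ^^ k) a * (D ^^ (Suc n - k)) b"]
    by (simp add: sum.atLeast_Suc_atMost atMost_atLeast0)
  also have "\<dots> = (D ^^ Suc n) a * b + (D ^^ Suc n) b * a +
      (\<Sum>k=1..n. of_nat (Suc n choose k) * (D ^^ k) a * (D ^^ (Suc n - k)) b)"
    by (auto simp: field_simps choose_reduce_nat simp flip: sum.distrib)
  also have "\<dots> = (\<Sum>k\<le>Suc n. of_nat (Suc n choose k) * (D ^^ k) a * (D ^^ (Suc n - k)) b)"
    by (simp add: atMost_atLeast0 sum.atLeast_Suc_atMost field_simps)
  finally show ?case .
qed simp

end


definition pdo_bound :: "(int \<Rightarrow> 'a::zero) \<Rightarrow> int \<Rightarrow> bool" where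
  "pdo_bound A a \<longleftrightarrow> (\<forall>k>a. A k = 0)"

lemma pdo_bound_mono: "pdo_bound A a \<Longrightarrow> a \<le> a' \<Longrightarrow> pdo_bound A a'"
  unfolding pdo_bound_def by auto

lemma pdo_boundD: "pdo_bound A a \<Longrightarrow> A k \<noteq> 0 \<Longrightarrow> k \<le> a"
  unfolding pdo_bound_def by force

lemma is_pdo_iff_pdo_bound: "is_pdo A \<longleftrightarrow> (\<exists>a. pdo_bound A a)"
  unfolding is_pdo_def pdo_bound_def by auto

lemma pdo_bound_const: "pdo_bound (pdo_const c) 0"
  unfolding pdo_bound_def pdo_const_def by auto

lemma pdo_bound_Xinv: "pdo_bound (pdo_Xinv :: int \<Rightarrow> 'a::{zero,one}) (-1)"
  unfolding pdo_bound_def pdo_Xinv_def by auto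

lemma pdo_bound_map: "pdo_bound A a \<Longrightarrow> f 0 = 0 \<Longrightarrow> pdo_bound (\<lambda>i. f (A i)) a"
  unfolding pdo_bound_def by auto

lemma pdo_bound_diff:
  "pdo_bound A a \<Longrightarrow> pdo_bound B a \<Longrightarrow> pdo_bound (\<lambda>i. A i - B i :: 'a::ab_group_add) a"
  unfolding pdo_bound_def by auto

lemma pdo_has_order_exists:
  assumes "pdo_bound A a" "A \<noteq> (\<lambda>_. 0)"
  shows "\<exists>t. pdo_has_order A t"
proof -
  obtain k0 where k0: "A k0 \<noteq> 0"
    using assms(2) by auto
  let ?S = "{k. k0 \<le> k \<and> k \<le> a \<and> A k \<noteq> 0}"
  have finite: "finite ?S"
    by (rule finite_subset[of _ "{k0..a}"]) auto
  have "k0 \<in> ?S"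
    using k0 pdo_boundD[OF assms(1) k0] by auto
  then have "Max ?S \<in> ?S"
    using finite by (intro Max_in) auto
  moreover have "A k = 0" if "Max ?S < k" for k
  proof (rule ccontr)
    assume "A k \<noteq> 0"
    then have "k \<in> ?S"
      using pdo_boundD[OF assms(1)] \<open>Max ?S < k\<close> \<open>Max ?S \<in> ?S\<close> by auto
    then show False
      using Max_ge[OF finite] \<open>Max ?S < k\<close> by fastforce
  qed
  ultimately show ?thesis
    unfolding pdo_has_order_def by blast
qed

lemma pdo_mult_zero_left [simp]: "pdo_mult dx (\<lambda>_. 0) B = (\<lambda>_. 0)"
  unfolding pdo_mult_def by simp

lemma pdo_mult_zero_right [simp]: "pdo_mult dx A (\<lambda>_. 0) = (\<lambda>_. 0)"
  unfolding pdo_mult_def by simp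

context field_derivation
begin

abbreviation pdo_mult_term :: "(int \<Rightarrow> 'a) \<Rightarrow> (int \<Rightarrow> 'a) \<Rightarrow> int \<Rightarrow> int \<Rightarrow> nat \<Rightarrow> 'a" where
  "pdo_mult_term A B m i k \<equiv> A i * (of_int i gchoose k) * (D ^^ k) (B (m + int k - i))"

lemma pdo_mult_support_finite:
  assumes "pdo_bound A a" "pdo_bound B b"
  shows "finite {(i, k). A i \<noteq> 0 \<and> B (m + int k - i) \<noteq> 0}"
proof (rule finite_subset)
  show "{(i, k). A i \<noteq> 0 \<and> B (m + int k - i) \<noteq> 0} \<subseteq> {m - b..a} \<times> {..nat (a + b - m)}"
    using pdo_boundD[OF assms(1)] pdo_boundD[OF assms(2)] by fastforce
qed auto

lemma pdo_mult_eq_sum: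
  assumes "pdo_bound A a" "pdo_bound B b" "finite I" "finite K"
    and outside: "\<And>i k. (i, k) \<notin> I \<times> K \<Longrightarrow> A i \<noteq> 0 \<Longrightarrow> B (m + int k - i) \<noteq> 0 \<Longrightarrow>
      pdo_mult_term A B m i k = 0"
  shows "pdo_mult D A B m = (\<Sum>i\<in>I. \<Sum>k\<in>K. pdo_mult_term A B m i k)"
proof -
  let ?S = "{(i, k). A i \<noteq> 0 \<and> B (m + int k - i) \<noteq> 0}"
  have "pdo_mult D A B m = (\<Sum>(i, k)\<in>?S. pdo_mult_term A B m i k)"
    unfolding pdo_mult_def by simp
  also have "\<dots> = (\<Sum>(i, k)\<in>?S \<inter> (I \<times> K). pdo_mult_term A B m i k)"
    by (rule sum.mono_neutral_right)
      (use pdo_mult_support_finite[OF assms(1,2)] in \<open>auto simp del: mult_eq_0_iff intro!: outside\<close>)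
  also have "\<dots> = (\<Sum>(i, k)\<in>I \<times> K. pdo_mult_term A B m i k)"
    by (rule sum.mono_neutral_left) (use assms(3,4) in auto)
  also have "\<dots> = (\<Sum>i\<in>I. \<Sum>k\<in>K. pdo_mult_term A B m i k)"
    by (rule sum.cartesian_product[symmetric])
  finally show ?thesis .
qed

lemma pdo_mult_eq_sum_box:
  assumes "pdo_bound A a" "pdo_bound B b" "lo \<le> m - b" "a \<le> hi" "a + b - m \<le> int N"
  shows "pdo_mult D A B m = (\<Sum>i\<in>{lo..hi}. \<Sum>k\<le>N. pdo_mult_term A B m i k)"
  by (rule pdo_mult_eq_sum[OF assms(1,2)])
    (use pdo_boundD[OF assms(1)] pdo_boundD[OF assms(2)] assms(3-5) in force)+

lemma pdo_mult_eq_sum_bounds: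
  assumes "pdo_bound A a" "pdo_bound B b"
  shows "pdo_mult D A B m = (\<Sum>i\<in>{m - b..a}. \<Sum>k\<le>nat (a + b - m). pdo_mult_term A B m i k)"
  by (rule pdo_mult_eq_sum_box[OF assms]) auto

lemma pdo_bound_mult:
  assumes "pdo_bound A a" "pdo_bound B b"
  shows "pdo_bound (pdo_mult D A B) (a + b)"
  unfolding pdo_bound_def
proof (intro allI impI)
  fix m assume "a + b < m"
  then have no_terms: "{(i, k). A i \<noteq> 0 \<and> B (m + int k - i) \<noteq> 0} = {}"
    using pdo_boundD[OF assms(1)] pdo_boundD[OF assms(2)] by fastforce
  show "pdo_mult D A B m = 0"
    unfolding pdo_mult_def no_terms by simp
qed

lemma pdo_mult_top:
  assumes "pdo_bound A a" "pdo_bound B b"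
  shows "pdo_mult D A B (a + b) = A a * B b"
proof -
  have "pdo_mult D A B (a + b) = (\<Sum>i\<in>{a}. \<Sum>k\<in>{0}. pdo_mult_term A B (a + b) i k)"
    by (rule pdo_mult_eq_sum[OF assms])
      (use pdo_boundD[OF assms(1)] pdo_boundD[OF assms(2)] in force)+
  then show ?thesis
    by simp
qed

lemma pdo_mult_one_left:
  assumes "pdo_bound B b"
  shows "pdo_mult D (pdo_const 1) B m = B m"
proof -
  have "pdo_mult D (pdo_const 1) B m = (\<Sum>i\<in>{0}. \<Sum>k\<in>{0}. pdo_mult_term (pdo_const 1) B m i k)"
    by (rule pdo_mult_eq_sum[OF pdo_bound_const assms])
      (auto simp: pdo_const_def gbinomial_0_left split: if_splits)
  then show ?thesis
    by (simp add: pdo_const_def)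
qed

lemma pdo_mult_one_right:
  assumes "pdo_bound B b"
  shows "pdo_mult D B (pdo_const 1) m = B m"
proof -
  have "pdo_mult D B (pdo_const 1) m = (\<Sum>i\<in>{m}. \<Sum>k\<in>{0}. pdo_mult_term B (pdo_const 1) m i k)"
    by (rule pdo_mult_eq_sum[OF assms pdo_bound_const])
      (auto simp: pdo_const_def higher_one split: if_splits)
  then show ?thesis
    by (simp add: pdo_const_def)
qed

lemma pdo_mult_diff_left:
  assumes "pdo_bound A a" "pdo_bound A' a" "pdo_bound B b"
  shows "pdo_mult D (\<lambda>i. A i - A' i) B m = pdo_mult D A B m - pdo_mult D A' B m"
  unfolding pdo_mult_eq_sum_bounds[OF pdo_bound_diff[OF assms(1,2)] assms(3)]
    pdo_mult_eq_sum_bounds[OF assms(1,3)] pdo_mult_eq_sum_bounds[OF assms(2,3)]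
  by (simp add: algebra_simps flip: sum_subtractf)

lemma pdo_mult_diff_right:
  assumes "pdo_bound B b" "pdo_bound B' b" "pdo_bound A a"
  shows "pdo_mult D A (\<lambda>i. B i - B' i) m = pdo_mult D A B m - pdo_mult D A B' m"
  unfolding pdo_mult_eq_sum_bounds[OF assms(3) pdo_bound_diff[OF assms(1,2)]]
    pdo_mult_eq_sum_bounds[OF assms(3,1)] pdo_mult_eq_sum_bounds[OF assms(3,2)]
  by (simp add: algebra_simps higher_diff flip: sum_subtractf)

lemma pdo_pow_Suc: "pdo_pow D R (Suc j) = pdo_mult D R (pdo_pow D R j)"
  unfolding pdo_pow_def by simp

lemma pdo_pow_one:
  assumes "pdo_bound R r"
  shows "pdo_pow D R 1 = R"
  using pdo_mult_one_right[OF assms] by (auto simp: pdo_pow_def)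

lemma pdo_pow_top:
  assumes "pdo_bound R r"
  shows "pdo_bound (pdo_pow D R j) (int j * r) \<and> pdo_pow D R j (int j * r) = R r ^ j"
proof (induction j)
  case 0
  then show ?case
    by (simp add: pdo_pow_def pdo_bound_def pdo_const_def)
next
  case (Suc j)
  have "int (Suc j) * r = r + int j * r"
    by (simp add: algebra_simps)
  then show ?case
    using pdo_bound_mult[OF assms Suc.IH[THEN conjunct1]]
      pdo_mult_top[OF assms Suc.IH[THEN conjunct1]] Suc.IH
    by (simp add: pdo_pow_Suc)
qed

end


lemma sum_square_triangle:
  fixes \<psi> :: "nat \<Rightarrow> nat \<Rightarrow> 'a::comm_monoid_add"
  assumes "\<And>r l. N < r + l \<Longrightarrow> \<psi> r l = 0"
  shows "(\<Sum>r\<le>N. \<Sum>l\<le>N. \<psi> r l) = (\<Sum>q\<le>N. \<Sum>r\<le>q. \<psi> r (q - r))"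
proof -
  have "(\<Sum>r\<le>N. \<Sum>l\<le>N. \<psi> r l) = (\<Sum>(r, l)\<in>{..N} \<times> {..N}. \<psi> r l)"
    by (rule sum.cartesian_product)
  also have "\<dots> = (\<Sum>(r, l)\<in>{(r, l). r + l \<le> N}. \<psi> r l)"
  proof (rule sum.mono_neutral_right)
    show "\<forall>x\<in>{..N} \<times> {..N} - {(r, l). r + l \<le> N}. (case x of (r, l) \<Rightarrow> \<psi> r l) = 0"
      using assms by (auto simp: not_le) (meson leI)
  qed auto
  also have "\<dots> = (\<Sum>q\<le>N. \<Sum>r\<le>q. \<psi> r (q - r))"
    by (rule sum.triangle_reindex_eq)
  finally show ?thesis .
qed

text \<open>The coefficient identity behind associativity: after the Leibniz rule, the trinomial
revision turns binom(i, k) binom(k, p) into binom(i, p) binom(i - p, k - p), and Vandermonde's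
identity then sums binom(i - p, r) binom(j, q - r) over r.\<close>

lemma gbinomial_Leibniz_sum:
  fixes Y :: "nat \<Rightarrow> nat \<Rightarrow> 'a::field_char_0" and i j :: int
  assumes Y_vanishes: "\<And>p q. N < p + q \<Longrightarrow> Y p q = 0"
  shows "(\<Sum>k\<le>N. \<Sum>l\<le>N. \<Sum>p\<le>k. (of_int i gchoose k) * (of_int j gchoose l) * of_nat (k choose p) *
            Y p (k - p + l))
       = (\<Sum>p\<le>N. \<Sum>q\<le>N. (of_int i gchoose p) * (of_int (i + j - int p) gchoose q) * Y p q)"
proof -
  define h where "h p r = (\<Sum>l\<le>N. (of_int i gchoose p) * ((of_int i - of_nat p) gchoose r) *
    (of_int j gchoose l) * Y p (r + l))" for p r
  have trinomial: "(of_int i gchoose k) * of_nat (k choose p) =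
      (of_int i gchoose p) * ((of_int i - of_nat p) gchoose (k - p) :: 'a)" if "p \<le> k" for k p :: nat
    by (metis binomial_gbinomial gbinomial_trinomial_revision that)
  have Vandermonde: "(\<Sum>r\<le>q. ((of_int i - of_nat p) gchoose r) * (of_int j gchoose (q - r))) =
      (of_int (i + j - int p) :: 'a) gchoose q" for p q
    unfolding atMost_atLeast0 gbinomial_Vandermonde by (simp add: algebra_simps)
  have row_sum: "(\<Sum>r\<le>N. h p r) =
      (\<Sum>q\<le>N. (of_int i gchoose p) * (of_int (i + j - int p) gchoose q) * Y p q)" for p
  proof -
    have "(\<Sum>r\<le>N. h p r) = (\<Sum>q\<le>N. \<Sum>r\<le>q. (of_int i gchoose p) * ((of_int i - of_nat p) gchoose r) *
        (of_int j gchoose (q - r)) * Y p q)"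
      unfolding h_def by (subst sum_square_triangle) (simp_all add: Y_vanishes)
    also have "\<dots> = (\<Sum>q\<le>N. (of_int i gchoose p) * Y p q *
        (\<Sum>r\<le>q. ((of_int i - of_nat p) gchoose r) * (of_int j gchoose (q - r))))"
      by (simp add: sum_distrib_left ac_simps)
    finally show ?thesis
      unfolding Vandermonde by (simp add: ac_simps)
  qed
  have "(\<Sum>l\<le>N. \<Sum>p\<le>k. (of_int i gchoose k) * (of_int j gchoose l) * of_nat (k choose p) *
      Y p (k - p + l)) = (\<Sum>p\<le>k. h p (k - p))" for k
    unfolding h_def by (subst sum.swap) (intro sum.cong refl; simp add: trinomial[symmetric])
  then have "(\<Sum>k\<le>N. \<Sum>l\<le>N. \<Sum>p\<le>k. (of_int i gchoose k) * (of_int j gchoose l) *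
      of_nat (k choose p) * Y p (k - p + l)) = (\<Sum>k\<le>N. \<Sum>p\<le>k. h p (k - p))"
    by simp
  also have "\<dots> = (\<Sum>p\<le>N. \<Sum>r\<le>N. h p r)"
    by (rule sum_square_triangle[symmetric]) (simp add: h_def Y_vanishes)
  finally show ?thesis
    by (simp add: row_sum)
qed

lemma sum_int_shift:
  fixes f :: "int \<Rightarrow> 'a::comm_monoid_add"
  assumes "finite T" "finite J" "\<And>t. t \<notin> T \<Longrightarrow> f t = 0" "\<And>j. j \<notin> J \<Longrightarrow> f (j + s) = 0"
  shows "(\<Sum>t\<in>T. f t) = (\<Sum>j\<in>J. f (j + s))"
proof -
  have "(\<Sum>t\<in>T. f t) = Sum_any f"
    by (rule Sum_any.expand_superset[symmetric]) (use assms in auto)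
  also have "\<dots> = Sum_any (\<lambda>j. f (j + s))"
    by (rule Sum_any.reindex_cong[of "\<lambda>j. j + s"])
      (auto intro!: bij_betw_byWitness[where f'="\<lambda>j. j - s"])
  also have "\<dots> = (\<Sum>j\<in>J. f (j + s))"
    by (rule Sum_any.expand_superset) (use assms in auto)
  finally show ?thesis .
qed

lemma sum_swap_pairs:
  "(\<Sum>t\<in>T. \<Sum>q\<in>Q. \<Sum>i\<in>I. \<Sum>p\<in>P. f t q i p) = (\<Sum>i\<in>I. \<Sum>p\<in>P. \<Sum>t\<in>T. \<Sum>q\<in>Q. f t q i p)"
proof -
  have "(\<Sum>t\<in>T. \<Sum>q\<in>Q. \<Sum>i\<in>I. \<Sum>p\<in>P. f t q i p) = (\<Sum>t\<in>T. \<Sum>i\<in>I. \<Sum>p\<in>P. \<Sum>q\<in>Q. f t q i p)"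
    by (subst (2) sum.swap) (rule sum.cong[OF refl], subst sum.swap, simp)
  also have "\<dots> = (\<Sum>i\<in>I. \<Sum>p\<in>P. \<Sum>t\<in>T. \<Sum>q\<in>Q. f t q i p)"
    by (subst sum.swap) (rule sum.cong[OF refl], rule sum.swap)
  finally show ?thesis .
qed


context field_derivation
begin

definition triple_term ::
    "(int \<Rightarrow> 'a) \<Rightarrow> (int \<Rightarrow> 'a) \<Rightarrow> (int \<Rightarrow> 'a) \<Rightarrow> int \<Rightarrow> int \<Rightarrow> int \<Rightarrow> nat \<Rightarrow> nat \<Rightarrow> 'a" where
  "triple_term A B C m i j p q = A i * (D ^^ p) (B j) * (D ^^ q) (C (m + int p + int q - i - j))"

definition triple_product_sum ::
    "(int \<Rightarrow> 'a) \<Rightarrow> (int \<Rightarrow> 'a) \<Rightarrow> (int \<Rightarrow> 'a) \<Rightarrow> int \<Rightarrow> int set \<Rightarrow> int set \<Rightarrow> nat \<Rightarrow> 'a" where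
  "triple_product_sum A B C m I J N = (\<Sum>i\<in>I. \<Sum>j\<in>J. \<Sum>p\<le>N. \<Sum>q\<le>N.
      (of_int i gchoose p) * (of_int (i + j - int p) gchoose q) * triple_term A B C m i j p q)"

lemma triple_term_vanishes:
  assumes "pdo_bound A a" "pdo_bound B b" "pdo_bound C c" "a + b + c - m < int (p + q)"
  shows "triple_term A B C m i j p q = 0"
proof (cases "A i = 0 \<or> B j = 0")
  case False
  then have "i \<le> a" "j \<le> b"
    using pdo_boundD[OF assms(1)] pdo_boundD[OF assms(2)] by auto
  then have "C (m + int p + int q - i - j) = 0"
    using assms(3,4) unfolding pdo_bound_def by auto
  then show ?thesis
    by (simp add: triple_term_def)
qed (auto simp: triple_term_def)

lemma higher_pdo_mult_term:
  "(D ^^ k) (pdo_mult_term B C n j l) = (\<Sum>p\<le>k. (of_int j gchoose l) * of_nat (k choose p) *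
    (D ^^ p) (B j) * (D ^^ (k - p + l)) (C (n + int l - j)))"
  using higher_mult_const[of "of_int j gchoose l" k "B j * (D ^^ l) (C (n + int l - j))"]
  by (simp add: higher_Leibniz sum_distrib_left higher_higher ac_simps)

lemma pdo_mult_assoc_left_sum:
  assumes bA: "pdo_bound A a" and bB: "pdo_bound B b" and bC: "pdo_bound C c"
  shows "pdo_mult D (pdo_mult D A B) C m =
    triple_product_sum A B C m {m - b - c..a} {m - a - c..b} (nat (a + b + c - m))"
proof -
  define N where "N = nat (a + b + c - m)"
  define I where "I = {m - b - c..a}"
  define J where "J = {m - a - c..b}"
  define T where "T = {m - c..a + b}"
  define \<Phi> where "\<Phi> t q i p = A i * (of_int i gchoose p) * (D ^^ p) (B (t + int p - i)) *
    (of_int t gchoose q) * (D ^^ q) (C (m + int q - t))" for t q i p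
  have N: "a + b + c - m \<le> int N"
    by (simp add: N_def)
  have "pdo_mult D (pdo_mult D A B) C m =
      (\<Sum>t\<in>T. \<Sum>q\<le>N. pdo_mult D A B t * (of_int t gchoose q) * (D ^^ q) (C (m + int q - t)))"
    unfolding T_def by (rule pdo_mult_eq_sum_box[OF pdo_bound_mult[OF bA bB] bC]) (use N in auto)
  also have "\<dots> = (\<Sum>t\<in>T. \<Sum>q\<le>N. \<Sum>i\<in>I. \<Sum>p\<le>N. \<Phi> t q i p)"
  proof (intro sum.cong refl)
    fix t q assume "t \<in> T"
    then have "pdo_mult D A B t = (\<Sum>i\<in>I. \<Sum>p\<le>N. pdo_mult_term A B t i p)"
      unfolding I_def T_def by (intro pdo_mult_eq_sum_box[OF bA bB]) (use N in auto)
    then show "pdo_mult D A B t * (of_int t gchoose q) * (D ^^ q) (C (m + int q - t)) =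
        (\<Sum>i\<in>I. \<Sum>p\<le>N. \<Phi> t q i p)"
      by (simp add: \<Phi>_def sum_distrib_right)
  qed
  also have "\<dots> = (\<Sum>i\<in>I. \<Sum>p\<le>N. \<Sum>t\<in>T. \<Sum>q\<le>N. \<Phi> t q i p)"
    by (rule sum_swap_pairs)
  also have "\<dots> = (\<Sum>i\<in>I. \<Sum>p\<le>N. \<Sum>j\<in>J. \<Sum>q\<le>N. \<Phi> (j + (i - int p)) q i p)"
  proof (rule sum.cong[OF refl], rule sum.cong[OF refl])
    fix i p
    have vanishes: "(\<Sum>q\<le>N. \<Phi> t q i p) = 0"
      if "A i \<noteq> 0 \<Longrightarrow> t \<notin> {m - c..i - int p + b}" for t
    proof (cases "A i = 0")
      case False
      then have "B (t + int p - i) = 0 \<or> C (m + int q - t) = 0" for q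
        using that bB bC unfolding pdo_bound_def by auto
      then have "\<Phi> t q i p = 0" for q
        unfolding \<Phi>_def by (metis higher_zero mult_zero_left mult_zero_right)
      then show ?thesis
        by simp
    qed (simp add: \<Phi>_def)
    have i_le: "A i \<noteq> 0 \<Longrightarrow> i \<le> a"
      by (rule pdo_boundD[OF bA])
    show "(\<Sum>t\<in>T. \<Sum>q\<le>N. \<Phi> t q i p) = (\<Sum>j\<in>J. \<Sum>q\<le>N. \<Phi> (j + (i - int p)) q i p)"
      by (rule sum_int_shift) (auto simp: T_def J_def dest: i_le intro!: vanishes)
  qed
  also have "\<dots> = triple_product_sum A B C m I J N"
    unfolding triple_product_sum_def
    by (subst (2) sum.swap) (intro sum.cong refl; simp add: \<Phi>_def triple_term_def algebra_simps)
  finally show ?thesis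
    unfolding I_def J_def N_def .
qed


lemma pdo_mult_assoc_right_sum:
  assumes bA: "pdo_bound A a" and bB: "pdo_bound B b" and bC: "pdo_bound C c"
  shows "pdo_mult D A (pdo_mult D B C) m =
    triple_product_sum A B C m {m - b - c..a} {m - a - c..b} (nat (a + b + c - m))"
proof -
  define N where "N = nat (a + b + c - m)"
  define I where "I = {m - b - c..a}"
  define J where "J = {m - a - c..b}"
  define \<Psi> where "\<Psi> i k j l p = A i * (of_int i gchoose k) * (of_int j gchoose l) *
    of_nat (k choose p) * (D ^^ p) (B j) * (D ^^ (k - p + l)) (C (m + int k - i + int l - j))"
    for i k j l p
  have N: "a + b + c - m \<le> int N"
    by (simp add: N_def)
  have "pdo_mult D A (pdo_mult D B C) m =
      (\<Sum>i\<in>I. \<Sum>k\<le>N. A i * (of_int i gchoose k) * (D ^^ k) (pdo_mult D B C (m + int k - i)))"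
    unfolding I_def by (rule pdo_mult_eq_sum_box[OF bA pdo_bound_mult[OF bB bC]]) (use N in auto)
  also have "\<dots> = (\<Sum>i\<in>I. \<Sum>k\<le>N. \<Sum>j\<in>J. \<Sum>l\<le>N. \<Sum>p\<le>k. \<Psi> i k j l p)"
  proof (intro sum.cong refl)
    fix i k
    show "A i * (of_int i gchoose k) * (D ^^ k) (pdo_mult D B C (m + int k - i)) =
        (\<Sum>j\<in>J. \<Sum>l\<le>N. \<Sum>p\<le>k. \<Psi> i k j l p)"
    proof (cases "A i = 0")
      case False
      then have "i \<le> a"
        by (rule pdo_boundD[OF bA])
      then have BC: "pdo_mult D B C (m + int k - i) =
          (\<Sum>j\<in>J. \<Sum>l\<le>N. pdo_mult_term B C (m + int k - i) j l)"
        unfolding J_def by (intro pdo_mult_eq_sum_box[OF bB bC]) (use N in auto)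
      show ?thesis
        unfolding BC higher_sum higher_pdo_mult_term
        by (simp add: \<Psi>_def sum_distrib_left ac_simps)
    qed (simp add: \<Psi>_def)
  qed
  also have "\<dots> = (\<Sum>i\<in>I. \<Sum>j\<in>J. \<Sum>k\<le>N. \<Sum>l\<le>N. \<Sum>p\<le>k. \<Psi> i k j l p)"
    by (rule sum.cong[OF refl], rule sum.swap)
  also have "\<dots> = triple_product_sum A B C m I J N"
    unfolding triple_product_sum_def
  proof (rule sum.cong[OF refl], rule sum.cong[OF refl])
    fix i j
    have "(\<Sum>k\<le>N. \<Sum>l\<le>N. \<Sum>p\<le>k. \<Psi> i k j l p) = (\<Sum>k\<le>N. \<Sum>l\<le>N. \<Sum>p\<le>k.
        (of_int i gchoose k) * (of_int j gchoose l) * of_nat (k choose p) *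
        triple_term A B C m i j p (k - p + l))"
      by (intro sum.cong refl) (simp add: \<Psi>_def triple_term_def algebra_simps)
    also have "\<dots> = (\<Sum>p\<le>N. \<Sum>q\<le>N. (of_int i gchoose p) * (of_int (i + j - int p) gchoose q) *
        triple_term A B C m i j p q)"
      by (rule gbinomial_Leibniz_sum) (use N triple_term_vanishes[OF bA bB bC] in auto)
    finally show "(\<Sum>k\<le>N. \<Sum>l\<le>N. \<Sum>p\<le>k. \<Psi> i k j l p) = \<dots>" .
  qed
  finally show ?thesis
    unfolding I_def J_def N_def .
qed

lemma pdo_mult_assoc:
  assumes "pdo_bound A a" "pdo_bound B b" "pdo_bound C c"
  shows "pdo_mult D (pdo_mult D A B) C m = pdo_mult D A (pdo_mult D B C) m"
  unfolding pdo_mult_assoc_left_sum[OF assms] pdo_mult_assoc_right_sum[OF assms] ..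

end


lemma pdo_has_order_iff: "pdo_has_order A t \<longleftrightarrow> A t \<noteq> 0 \<and> pdo_bound A t"
  unfolding pdo_has_order_def pdo_bound_def by simp

lemma op_M_0: "op_M D u 0 = (\<lambda>m. - pdo_mult D pdo_Xinv (pdo_const u) m)"
  unfolding op_M_def by auto

lemma op_M_1: "op_M D u 1 = pdo_const 1"
  unfolding op_M_def by auto

lemma op_M_ge_2: "p \<ge> 2 \<Longrightarrow> op_M D u p = (\<lambda>_. 0)"
  unfolding op_M_def by auto

locale commuting_derivations = dx: field_derivation D + dy: field_derivation E
  for D E :: "'a::field_char_0 \<Rightarrow> 'a" +
  assumes commute: "\<And>a. D (E a) = E (D a)"
begin

lemma higher_commute: "E ((D ^^ k) x) = (D ^^ k) (E x)"
  by (induction k) (auto simp: commute[symmetric])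

lemma pdo_mult_derivative:
  assumes "pdo_bound A a" "pdo_bound B b"
  shows "E (pdo_mult D A B m) = pdo_mult D (\<lambda>i. E (A i)) B m + pdo_mult D A (\<lambda>i. E (B i)) m"
proof -
  have bEA: "pdo_bound (\<lambda>i. E (A i)) a" and bEB: "pdo_bound (\<lambda>i. E (B i)) b"
    using assms by (auto intro: pdo_bound_map)
  show ?thesis
    unfolding dx.pdo_mult_eq_sum_bounds[OF assms] dx.pdo_mult_eq_sum_bounds[OF bEA assms(2)]
      dx.pdo_mult_eq_sum_bounds[OF assms(1) bEB]
    by (simp add: dy.sum dy.mult higher_commute algebra_simps flip: sum.distrib)
qed

text \<open>The commutator [Q, M] of Q in F((X)) with M = Y + N, N = -X^(-1) u, is the constant
polynomial Q N - N Q - Q_y, because Y Q = Q Y + Q_y.\<close>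

definition bracket_M :: "'a \<Rightarrow> (int \<Rightarrow> 'a) \<Rightarrow> (int \<Rightarrow> 'a)" where
  "bracket_M u Q = (\<lambda>m. pdo_mult D Q (op_M D u 0) m - pdo_mult D (op_M D u 0) Q m - E (Q m))"

lemma pdo_bound_op_M_0: "pdo_bound (op_M D u 0) (-1)"
  using dx.pdo_bound_mult[OF pdo_bound_Xinv pdo_bound_const, of u]
  unfolding op_M_0 pdo_bound_def by auto

lemma pdo_bound_bracket_M:
  assumes "pdo_bound A a"
  shows "pdo_bound (bracket_M u A) a"
proof -
  have "pdo_bound (pdo_mult D A (op_M D u 0)) (a + -1)"
    by (rule dx.pdo_bound_mult[OF assms pdo_bound_op_M_0])
  moreover have "pdo_bound (pdo_mult D (op_M D u 0) A) (-1 + a)"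
    by (rule dx.pdo_bound_mult[OF pdo_bound_op_M_0 assms])
  ultimately show ?thesis
    using assms unfolding pdo_bound_def bracket_M_def by auto
qed

lemma bracket_M_zero: "bracket_M u (\<lambda>_. 0) = (\<lambda>_. 0)"
  unfolding bracket_M_def by simp

lemma bracket_M_mult:
  assumes bA: "pdo_bound A a" and bB: "pdo_bound B b"
  shows "bracket_M u (pdo_mult D A B) m = pdo_mult D (bracket_M u A) B m + pdo_mult D A (bracket_M u B) m"
proof -
  let ?N = "op_M D u 0"
  have bN: "pdo_bound ?N (-1)"
    by (rule pdo_bound_op_M_0)
  have bounds: "pdo_bound (pdo_mult D A ?N) a" "pdo_bound (pdo_mult D ?N A) a"
      "pdo_bound (pdo_mult D B ?N) b" "pdo_bound (pdo_mult D ?N B) b"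
    using dx.pdo_bound_mult[OF bA bN] dx.pdo_bound_mult[OF bN bA]
      dx.pdo_bound_mult[OF bB bN] dx.pdo_bound_mult[OF bN bB]
    by (auto elim: pdo_bound_mono)
  have bEA: "pdo_bound (\<lambda>i. E (A i)) a" and bEB: "pdo_bound (\<lambda>i. E (B i)) b"
    using bA bB by (auto intro: pdo_bound_map)
  have left: "pdo_mult D (bracket_M u A) B m = pdo_mult D (pdo_mult D A ?N) B m -
      pdo_mult D (pdo_mult D ?N A) B m - pdo_mult D (\<lambda>i. E (A i)) B m"
    unfolding bracket_M_def
    using dx.pdo_mult_diff_left[OF pdo_bound_diff[OF bounds(1,2)] bEA bB, of m]
      dx.pdo_mult_diff_left[OF bounds(1,2) bB, of m] by simp
  have right: "pdo_mult D A (bracket_M u B) m = pdo_mult D A (pdo_mult D B ?N) m -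
      pdo_mult D A (pdo_mult D ?N B) m - pdo_mult D A (\<lambda>i. E (B i)) m"
    unfolding bracket_M_def
    using dx.pdo_mult_diff_right[OF pdo_bound_diff[OF bounds(3,4)] bEB bA, of m]
      dx.pdo_mult_diff_right[OF bounds(3,4) bA, of m] by simp
  have "bracket_M u (pdo_mult D A B) m = pdo_mult D A (pdo_mult D B ?N) m -
      pdo_mult D (pdo_mult D ?N A) B m - (pdo_mult D (\<lambda>i. E (A i)) B m + pdo_mult D A (\<lambda>i. E (B i)) m)"
    unfolding bracket_M_def
    using dx.pdo_mult_assoc[OF bA bB bN, of m] dx.pdo_mult_assoc[OF bN bA bB, of m]
      pdo_mult_derivative[OF bA bB, of m] by simp
  then show ?thesis
    unfolding left right dx.pdo_mult_assoc[OF bA bN bB] by simp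
qed

lemma ypoly_mult_of_pdo_left: "ypoly_mult D E (ypoly_of_pdo Q) B s m = pdo_mult D Q (B s) m"
proof (cases "Q = (\<lambda>_. 0) \<or> B s = (\<lambda>_. 0)")
  case True
  then have no_terms: "{(p, q, r). r \<le> p \<and> p + q = s + r \<and> ypoly_of_pdo Q p \<noteq> (\<lambda>_. 0) \<and>
      B q \<noteq> (\<lambda>_. 0)} = {}"
    unfolding ypoly_of_pdo_def by (auto split: if_splits)
  show ?thesis
    using True unfolding ypoly_mult_def no_terms by auto
next
  case False
  then have one_term: "{(p, q, r). r \<le> p \<and> p + q = s + r \<and> ypoly_of_pdo Q p \<noteq> (\<lambda>_. 0) \<and>
      B q \<noteq> (\<lambda>_. 0)} = {(0, s, 0)}"
    unfolding ypoly_of_pdo_def by (auto split: if_splits)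
  show ?thesis
    unfolding ypoly_mult_def one_term by (simp add: ypoly_of_pdo_def)
qed

lemma ypoly_mult_op_M_right: "ypoly_mult D E (op_M D u) (ypoly_of_pdo Q) s m =
   (if s = 0 then pdo_mult D (op_M D u 0) Q m + pdo_mult D (pdo_const 1) (\<lambda>i. E (Q i)) m
    else if s = 1 then pdo_mult D (pdo_const 1) Q m else 0)"
proof -
  let ?S = "{(p, q, r). r \<le> p \<and> p + q = s + r \<and> op_M D u p \<noteq> (\<lambda>_. 0) \<and>
    ypoly_of_pdo Q q \<noteq> (\<lambda>_. 0)}"
  let ?f = "\<lambda>(p, q, r). of_nat (p choose r) *
    pdo_mult D (op_M D u p) (\<lambda>i. (E ^^ r) (ypoly_of_pdo Q q i)) m"
  define F where "F = (if s = 0 then {(0, 0, 0), (1, 0, 1)}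
    else if s = 1 then {(1::nat, 0::nat, 0::nat)} else {})"
  have "?S \<subseteq> F"
  proof
    fix x assume "x \<in> ?S"
    then obtain p q r where x: "x = (p, q, r)" "r \<le> p" "p + q = s + r"
      "op_M D u p \<noteq> (\<lambda>_. 0)" "ypoly_of_pdo Q q \<noteq> (\<lambda>_. 0)"
      by auto
    have "q = 0"
      using x(5) unfolding ypoly_of_pdo_def by (auto split: if_splits)
    moreover have "p < 2"
      using x(4) op_M_ge_2[of p D u] by fastforce
    ultimately show "x \<in> F"
      using x unfolding F_def by auto
  qed
  moreover have "?f x = 0" if "x \<in> F - ?S" for x
    using that unfolding F_def by (auto split: if_splits)
  ultimately have "ypoly_mult D E (op_M D u) (ypoly_of_pdo Q) s m = sum ?f F"
    unfolding ypoly_mult_def by (intro sum.mono_neutral_left) (auto simp: F_def)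
  then show ?thesis
    unfolding F_def by (simp add: op_M_1[unfolded One_nat_def] ypoly_of_pdo_def)
qed

lemma ypoly_commutator_op_M:
  assumes "pdo_bound Q q"
  shows "ypoly_commutator D E (ypoly_of_pdo Q) (op_M D u) =
    (\<lambda>s m. if s = 0 then bracket_M u Q m else 0)"
proof (intro ext)
  fix s m
  show "ypoly_commutator D E (ypoly_of_pdo Q) (op_M D u) s m =
      (if s = 0 then bracket_M u Q m else 0)"
    unfolding ypoly_commutator_def ypoly_mult_of_pdo_left ypoly_mult_op_M_right
    using dx.pdo_mult_one_left[OF pdo_bound_map[OF assms]] dx.pdo_mult_one_left[OF assms]
      dx.pdo_mult_one_right[OF assms] op_M_1[of D u] op_M_ge_2[of s D u]
    by (auto simp: bracket_M_def)
qed

lemma bracket_M_pow_top: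
  assumes bR: "pdo_bound R r" and be: "pdo_bound (bracket_M u R) e"
  shows "pdo_bound (bracket_M u (pdo_pow D R (Suc j))) (e + int j * r) \<and>
    bracket_M u (pdo_pow D R (Suc j)) (e + int j * r) = of_nat (Suc j) * R r ^ j * bracket_M u R e"
proof (induction j)
  case 0
  then show ?case
    using be dx.pdo_pow_one[OF bR, unfolded One_nat_def] by simp
next
  case (Suc j)
  let ?Q = "pdo_pow D R (Suc j)"
  have bQ: "pdo_bound ?Q (int (Suc j) * r)" and Q_top: "?Q (int (Suc j) * r) = R r ^ Suc j"
    using dx.pdo_pow_top[OF bR] by blast+
  have shift: "r + (e + int j * r) = e + int (Suc j) * r"
    by (simp add: algebra_simps)
  have bracket_Suc: "bracket_M u (pdo_pow D R (Suc (Suc j))) =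
      (\<lambda>m. pdo_mult D (bracket_M u R) ?Q m + pdo_mult D R (bracket_M u ?Q) m)"
    unfolding dx.pdo_pow_Suc[of R "Suc j"] using bracket_M_mult[OF bR bQ] by blast
  show ?case
    unfolding bracket_Suc
    using dx.pdo_bound_mult[OF be bQ] dx.pdo_mult_top[OF be bQ]
      dx.pdo_bound_mult[OF bR Suc.IH[THEN conjunct1]] dx.pdo_mult_top[OF bR Suc.IH[THEN conjunct1]]
      Suc.IH Q_top
    by (simp add: shift pdo_bound_def algebra_simps)
qed

lemma bracket_M_pow_eq_zero:
  assumes bR: "pdo_bound R r" and n: "n \<ge> 1" and "bracket_M u (pdo_pow D R n) = (\<lambda>_. 0)"
  shows "bracket_M u R = (\<lambda>_. 0)"
proof (rule ccontr)
  assume nonzero: "bracket_M u R \<noteq> (\<lambda>_. 0)"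
  then have "R \<noteq> (\<lambda>_. 0)"
    using bracket_M_zero by auto
  then obtain \<rho> where b\<rho>: "pdo_bound R \<rho>" and "R \<rho> \<noteq> 0"
    using pdo_has_order_exists[OF bR] pdo_has_order_iff by metis
  obtain e where be: "pdo_bound (bracket_M u R) e" and "bracket_M u R e \<noteq> 0"
    using pdo_has_order_exists[OF pdo_bound_bracket_M[OF bR] nonzero] pdo_has_order_iff by metis
  obtain j where "n = Suc j"
    using n by (cases n) auto
  then have "bracket_M u (pdo_pow D R n) (e + int j * \<rho>) = of_nat n * R \<rho> ^ j * bracket_M u R e"
    using bracket_M_pow_top[OF b\<rho> be] by blast
  also have "\<dots> \<noteq> 0"
    using n \<open>R \<rho> \<noteq> 0\<close> \<open>bracket_M u R e \<noteq> 0\<close> by simp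
  finally show False
    using assms(3) by simp
qed

end

theorem lemma2:
  fixes dx dy :: "'a::field_char_0 \<Rightarrow> 'a" and u :: 'a
    and P R :: "int \<Rightarrow> 'a" and n :: nat
  assumes "is_derivation dx" and "is_derivation dy" and "\<And>a. dx (dy a) = dy (dx a)"
    and "n \<ge> 1"
    and "is_pdo P" and "pdo_has_order P (int n)"
    and "ypoly_commutator dx dy (ypoly_of_pdo P) (op_M dx u) = (\<lambda>_ _. 0)"
    and "is_pdo R" and "pdo_pow dx R n = P"
  shows "ypoly_commutator dx dy (ypoly_of_pdo R) (op_M dx u) = (\<lambda>_ _. 0)"
proof -
  interpret commuting_derivations dx dy
    by unfold_locales (use assms(1-3) in auto)
  obtain p where bP: "pdo_bound P p"
    using assms(5) is_pdo_iff_pdo_bound by auto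
  obtain r where bR: "pdo_bound R r"
    using assms(8) is_pdo_iff_pdo_bound by auto
  have "bracket_M u P = (\<lambda>_. 0)"
    using assms(7) unfolding ypoly_commutator_op_M[OF bP] by (metis (full_types))
  then have "bracket_M u R = (\<lambda>_. 0)"
    using bracket_M_pow_eq_zero[OF bR assms(4)] assms(9) by simp
  then show ?thesis
    unfolding ypoly_commutator_op_M[OF bR] by (simp add: fun_eq_iff)
qed

end
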